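(* Let $T\in\mathcal M_n$, and let $f,g:[0,\infty)\to[0,\infty)$ be continuous with $f(t)g(t)=t$ for all $t\ge0$. Then \[\|T\|\le\frac12\left(\Big\|\frac{f^2(|T|)+g^2(|T^*|)}{2}+\mathfrak RT\Big\|+\Big\|\frac{f^2(|T|)+g^2(|T^*|)}{2}-\mathfrak RT\Big\|\right).\] In particular, $\|T\|\le\frac14\big(\||T|+|T^*|+2\mathfrak RT\|+\||T|+|T^*|-2\mathfrak RT\|\big)$.
   Context: $\mathcal M_n$ denotes the algebra of $n\times n$ complex matrices; $\|\cdot\|$ is the operator (spectral) norm. $|X|=(X^*X)^{1/2}$; functions of positive semidefinite matrices are defined by functional calculus. $\mathfrak RT=\frac{T+T^*}{2}$. *)

theory Defs
  imports "HOL-Analysis.Analysis"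
begin

text \<open>n x n complex matrices are modelled as complex ^'n ^'n for a finite index type 'n.\<close>

definition cadj :: "complex^'n^'n \<Rightarrow> complex^'n^'n" where
  "cadj A = (\<chi> i j. cnj (A $ j $ i))"

definition unitary_mat :: "complex^'n^'n \<Rightarrow> bool" where
  "unitary_mat U \<longleftrightarrow> cadj U ** U = mat 1"

definition rdiag :: "('n \<Rightarrow> real) \<Rightarrow> complex^'n^'n" where
  "rdiag d = (\<chi> i j. if i = j then complex_of_real (d i) else 0)"

text \<open>Functional calculus for Hermitian matrices: if A = U diag(d) U* with U unitary and
  d real, then f(A) = U diag(f o d) U*. (Well defined for Hermitian A.)\<close>
definition mfun :: "(real \<Rightarrow> real) \<Rightarrow> complex^'n^'n \<Rightarrow> complex^'n^'n" where
  "mfun f A = (SOME B. \<exists>U d. unitary_mat U \<and> A = U ** rdiag d ** cadj U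
                         \<and> B = U ** rdiag (f \<circ> d) ** cadj U)"

definition mabs :: "complex^'n^'n \<Rightarrow> complex^'n^'n" where
  "mabs X = mfun sqrt (cadj X ** X)"

definition opnorm :: "complex^'n^'n \<Rightarrow> real" where
  "opnorm A = onorm (\<lambda>x. A *v x)"

definition ReM :: "complex^'n^'n \<Rightarrow> complex^'n^'n" where
  "ReM T = scaleR (1/2) (T + cadj T)"

end

theory Submission
  imports Defs
begin

text \<open>Diagonalising \<open>|T|\<close> and \<open>|T\<^sup>*|\<close> and using \<open>f(t) g(t) = t\<close> gives the mixed Schwarz
  inequality \<open>2 Re\<langle>u, T v\<rangle> \<le> \<langle>f\<^sup>2(|T|) v, v\<rangle> + \<langle>g\<^sup>2(|T\<^sup>*|) u, u\<rangle>\<close>, i.e. positivity of the block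
  matrix \<open>[[A, T\<^sup>*], [T, B]]\<close> with \<open>A = f\<^sup>2(|T|)\<close>, \<open>B = g\<^sup>2(|T\<^sup>*|)\<close>. Writing \<open>X, Y = (A + B)/2 \<plusminus> Re T\<close>,
  positivity of that form at a rescaled pair of points bounds its value at \<open>(v, u)\<close> by
  \<open>(\<parallel>X\<parallel> + \<parallel>Y\<parallel>)(|v + u|\<^sup>2 + |v - u|\<^sup>2)/2\<close>; for \<open>u\<close> parallel to \<open>T v\<close> with \<open>|u| = |v|\<close> the value is at
  least \<open>4 |v| |T v|\<close>, which gives \<open>\<parallel>T\<parallel> \<le> (\<parallel>X\<parallel> + \<parallel>Y\<parallel>)/2\<close>. The second inequality is the case
  \<open>f = g = \<surd>\<close>.\<close>

definition cinner :: "complex^'n \<Rightarrow> complex^'n \<Rightarrow> complex" where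
  "cinner x y = (\<Sum>i\<in>UNIV. cnj (x$i) * y$i)"

lemma Re_cinner: "Re (cinner x y) = x \<bullet> y"
  by (simp add: cinner_def inner_vec_def inner_complex_def)

lemma Im_cinner: "Im (cinner x y) = (\<i> *s x) \<bullet> y"
  by (simp add: cinner_def inner_vec_def inner_complex_def)

lemma cinner_eq_0_iff: "cinner x y = 0 \<longleftrightarrow> orthogonal x y \<and> orthogonal (\<i> *s x) y"
  by (simp add: complex_eq_iff Re_cinner Im_cinner orthogonal_def)

lemma cnj_cinner: "cnj (cinner x y) = cinner y x"
  by (simp add: cinner_def mult.commute)

lemma cinner_scaleR_left: "cinner (c *\<^sub>R x) y = of_real c * cinner x y"
  unfolding cinner_def vector_scaleR_component by (simp add: sum_distrib_left scaleR_conv_of_real mult_ac)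

lemma cinner_self: "cinner x x = of_real ((norm x)\<^sup>2)"
proof -
  have "Im (cinner x x) = 0" by (simp add: cinner_def)
  then show ?thesis by (simp add: complex_eq_iff Re_cinner power2_norm_eq_inner)
qed

lemma cinner_adjoint: "cinner x (A *v y) = cinner (cadj A *v x) y"
proof -
  have "cinner x (A *v y) = (\<Sum>i\<in>UNIV. \<Sum>j\<in>UNIV. cnj (x$i) * A$i$j * y$j)"
    unfolding cinner_def matrix_vector_mult_def by (simp add: sum_distrib_left mult_ac)
  also have "\<dots> = (\<Sum>j\<in>UNIV. \<Sum>i\<in>UNIV. cnj (x$i) * A$i$j * y$j)"
    by (rule sum.swap)
  also have "\<dots> = cinner (cadj A *v x) y"
    unfolding cinner_def matrix_vector_mult_def cadj_def by (simp add: sum_distrib_left mult_ac)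
  finally show ?thesis .
qed

lemma cadj_cadj [simp]: "cadj (cadj A) = A"
  by (simp add: cadj_def vec_eq_iff)

lemma inner_cadj: "x \<bullet> (cadj A *v y) = (A *v x) \<bullet> y"
  by (simp add: Re_cinner[symmetric] cinner_adjoint)

lemma cadj_mult: "cadj (A ** B) = cadj B ** cadj A"
  by (simp add: cadj_def matrix_matrix_mult_def vec_eq_iff mult.commute)

lemma cadj_rdiag [simp]: "cadj (rdiag d) = rdiag d"
  by (simp add: cadj_def rdiag_def vec_eq_iff)

lemma scaleR_matrix_vector_mult: "(c *\<^sub>R A) *v x = c *\<^sub>R (A *v (x::complex^'n))"
  by (simp add: matrix_vector_mult_def vec_eq_iff scaleR_sum_right)

lemma matrix_vector_scaleR: "A *v (c *\<^sub>R x) = c *\<^sub>R (A *v (x::complex^'n))"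
  by (simp add: linear_scale)

lemma hermitian_inner_commute:
  assumes "cadj H = H"
  shows "x \<bullet> (H *v y) = y \<bullet> (H *v x)"
  using inner_cadj[of x H y] assms by (simp add: inner_commute)

lemma unitary_mat_right: "unitary_mat U \<Longrightarrow> U ** cadj U = mat 1"
  unfolding unitary_mat_def using matrix_left_right_inverse by blast

lemma unitary_mat_cancel:
  assumes "unitary_mat U"
  shows "cadj U ** U = mat 1" "U ** cadj U = mat 1" "X ** cadj U ** U = X" "X ** U ** cadj U = X"
  using assms unitary_mat_right[OF assms]
  by (simp_all add: unitary_mat_def matrix_mul_assoc[symmetric])

lemma if_zero_mult: "(if P then x else 0) * y = (if P then x * y else (0::'a::mult_zero))"
  by simp

lemma mult_if_zero: "y * (if P then x else 0) = (if P then y * x else (0::'a::mult_zero))"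
  by simp

lemma rdiag_mult: "rdiag a ** rdiag b = rdiag (\<lambda>i. a i * b i)"
  unfolding rdiag_def matrix_matrix_mult_def
  by (simp add: vec_eq_iff if_zero_mult sum.delta)

lemma rdiag_matrix_vector_component: "(rdiag a *v x) $ i = of_real (a i) * x $ i"
  unfolding rdiag_def matrix_vector_mult_def by (simp add: if_zero_mult sum.delta)

lemma rdiag_matrix_mult_component: "(rdiag d ** W) $ i $ j = of_real (d i) * W $ i $ j"
  unfolding rdiag_def matrix_matrix_mult_def by (simp add: if_zero_mult sum.delta)

lemma matrix_mult_rdiag_component: "(W ** rdiag d) $ i $ j = W $ i $ j * of_real (d j)"
  unfolding rdiag_def matrix_matrix_mult_def by (simp add: mult_if_zero sum.delta')

lemma rdiag_commute_component:
  assumes "rdiag d ** W = W ** rdiag e" and "W $ i $ j \<noteq> 0"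
  shows "d i = e j"
proof -
  have "of_real (d i) * W $ i $ j = W $ i $ j * of_real (e j)"
    using assms(1) by (metis rdiag_matrix_mult_component matrix_mult_rdiag_component)
  then show ?thesis using assms(2) by (simp add: mult.commute)
qed

lemma cnj_mult_self: "cnj z * z = of_real ((cmod z)\<^sup>2)"
  using complex_norm_square[of z] by (simp add: mult.commute)

lemma cinner_rdiag_self: "cinner x (rdiag w *v x) = of_real (\<Sum>i\<in>UNIV. w i * (cmod (x$i))\<^sup>2)"
proof -
  have "cinner x (rdiag w *v x) = (\<Sum>i\<in>UNIV. of_real (w i) * (cnj (x$i) * x$i))"
    by (simp add: cinner_def rdiag_matrix_vector_component mult_ac)
  also have "\<dots> = of_real (\<Sum>i\<in>UNIV. w i * (cmod (x$i))\<^sup>2)"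
    by (simp add: cnj_mult_self)
  finally show ?thesis .
qed

lemma gram_rdiag_column:
  assumes "cadj M ** M = rdiag d"
  shows "d i = (\<Sum>j\<in>UNIV. (cmod (M$j$i))\<^sup>2)"
proof -
  have "of_real (d i) = (cadj M ** M) $ i $ i" using assms by (simp add: rdiag_def)
  also have "\<dots> = (\<Sum>j\<in>UNIV. cnj (M$j$i) * M$j$i)"
    by (simp add: cadj_def matrix_matrix_mult_def)
  also have "\<dots> = of_real (\<Sum>j\<in>UNIV. (cmod (M$j$i))\<^sup>2)"
    by (simp add: cnj_mult_self)
  finally show ?thesis by (simp only: of_real_eq_iff)
qed


section \<open>Spectral theorem for Hermitian matrices\<close>

lemma quadratic_nonpos_imp_linear_coeff_zero:
  fixes a b :: real
  assumes "\<And>t. a * t + b * t\<^sup>2 \<le> 0"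
  shows "a = 0"
proof (rule ccontr)
  assume a: "a \<noteq> 0"
  define c where "c = \<bar>b\<bar> + 1"
  have c: "c > 0" "2 * c + b > 0" unfolding c_def by auto
  define t where "t = a / (2 * c)"
  have "a * t + b * t\<^sup>2 = a\<^sup>2 / (4 * c\<^sup>2) * (2 * c + b)"
    unfolding t_def using c by (simp add: field_simps power2_eq_square)
  moreover have "a\<^sup>2 / (4 * c\<^sup>2) > 0" using a c by simp
  ultimately show False using assms[of t] c by (metis mult_pos_pos not_le)
qed

text \<open>A maximiser of the Rayleigh quotient on an invariant subspace is an eigenvector: perturbing
  it within the subspace shows that the residual \<open>H x\<^sub>0 - l x\<^sub>0\<close> is orthogonal to the subspace,
  while invariance puts it inside.\<close>

lemma rayleigh_maximizer_eigenvector: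
  fixes H :: "complex^'n^'n"
  assumes herm: "cadj H = H" and S: "subspace S" and inv: "\<And>x. x \<in> S \<Longrightarrow> H *v x \<in> S"
    and x0: "x0 \<in> S" "norm x0 = 1"
    and max: "\<And>y. y \<in> S \<Longrightarrow> norm y = 1 \<Longrightarrow> y \<bullet> (H *v y) \<le> x0 \<bullet> (H *v x0)"
  shows "H *v x0 = (x0 \<bullet> (H *v x0)) *\<^sub>R x0"
proof -
  define l where "l = x0 \<bullet> (H *v x0)"
  have bound: "y \<bullet> (H *v y) \<le> l * (norm y)\<^sup>2" if "y \<in> S" for y
  proof (cases "y = 0")
    case False
    have "(y /\<^sub>R norm y) \<bullet> (H *v (y /\<^sub>R norm y)) \<le> l"
      unfolding l_def using False S that by (intro max) (simp_all add: subspace_scale)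
    then show ?thesis
      using False by (simp add: matrix_vector_scaleR power2_eq_square field_simps)
  qed simp
  define w where "w = H *v x0 - l *\<^sub>R x0"
  have orth: "2 * (y \<bullet> w) = 0" if y: "y \<in> S" for y
  proof (rule quadratic_nonpos_imp_linear_coeff_zero)
    fix t :: real
    have "x0 + t *\<^sub>R y \<in> S" using S x0 y by (simp add: subspace_add subspace_scale)
    then have "(x0 + t *\<^sub>R y) \<bullet> (H *v (x0 + t *\<^sub>R y)) \<le> l * (norm (x0 + t *\<^sub>R y))\<^sup>2"
      by (rule bound)
    moreover have "(x0 + t *\<^sub>R y) \<bullet> (H *v (x0 + t *\<^sub>R y))
        = l + 2 * t * (y \<bullet> (H *v x0)) + t\<^sup>2 * (y \<bullet> (H *v y))"
      using hermitian_inner_commute[OF herm, of y x0] unfolding l_def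
      by (simp add: matrix_vector_right_distrib matrix_vector_scaleR inner_add_left inner_add_right
          algebra_simps power2_eq_square)
    moreover have "(norm (x0 + t *\<^sub>R y))\<^sup>2 = 1 + 2 * t * (y \<bullet> x0) + t\<^sup>2 * (norm y)\<^sup>2"
      using x0(2) unfolding power2_norm_eq_inner
      by (simp add: norm_eq_1 inner_add_left inner_add_right inner_commute[of x0 y] algebra_simps power2_eq_square)
    ultimately show "(2 * (y \<bullet> w)) * t + (y \<bullet> (H *v y) - l * (norm y)\<^sup>2) * t\<^sup>2 \<le> 0"
      unfolding w_def by (simp add: inner_diff_right algebra_simps)
  qed
  have "w \<in> S" unfolding w_def using S x0 inv by (simp add: subspace_diff subspace_scale)
  then have "w = 0" using orth[of w] by simp
  then show ?thesis unfolding w_def l_def by simp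
qed

lemma hermitian_invariant_subspace_eigenvector:
  fixes H :: "complex^'n^'n"
  assumes herm: "cadj H = H" and S: "subspace S" and inv: "\<And>x. x \<in> S \<Longrightarrow> H *v x \<in> S"
    and x1: "x1 \<in> S" "x1 \<noteq> 0"
  obtains x l where "x \<in> S" "norm x = 1" "H *v x = l *\<^sub>R x"
proof -
  have "compact (S \<inter> sphere 0 1)"
    using S by (simp add: closed_subspace closed_Int_compact compact_sphere)
  moreover have "x1 /\<^sub>R norm x1 \<in> S \<inter> sphere 0 1" using S x1 by (simp add: subspace_scale)
  then have "S \<inter> sphere 0 1 \<noteq> {}" by blast
  moreover have "continuous_on (S \<inter> sphere 0 1) (\<lambda>y. y \<bullet> (H *v y))"
    by (intro continuous_intros linear_continuous_on matrix_vector_mul_bounded_linear)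
  ultimately obtain x0 where x0: "x0 \<in> S \<inter> sphere 0 1"
    and "\<And>y. y \<in> S \<inter> sphere 0 1 \<Longrightarrow> y \<bullet> (H *v y) \<le> x0 \<bullet> (H *v x0)"
    using continuous_attains_sup[of "S \<inter> sphere 0 1" "\<lambda>y. y \<bullet> (H *v y)"] by blast
  then have "H *v x0 = (x0 \<bullet> (H *v x0)) *\<^sub>R x0"
    by (intro rayleigh_maximizer_eigenvector[OF herm S inv]) auto
  with x0 show ?thesis by (intro that) auto
qed

lemma cinner_orthogonal_complement_eq:
  "{x. \<forall>i\<in>A. cinner (e i) x = 0} = {x. \<forall>y \<in> e ` A \<union> (\<lambda>i. \<i> *s e i) ` A. orthogonal y x}"
  by (auto simp: cinner_eq_0_iff)

lemma subspace_cinner_orthogonal_complement: "subspace {x. \<forall>i\<in>A. cinner (e i) x = 0}"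
  unfolding cinner_orthogonal_complement_eq by (rule subspace_orthogonal_to_vectors)

lemma exists_cinner_orthogonal:
  fixes e :: "'a \<Rightarrow> complex^'n"
  assumes A: "finite A" "card A < CARD('n)"
  obtains x where "x \<noteq> 0" "\<And>i. i \<in> A \<Longrightarrow> cinner (e i) x = 0"
proof -
  define E where "E = e ` A \<union> (\<lambda>i. \<i> *s e i) ` A"
  have "dim E \<le> card E" using A by (simp add: E_def dim_le_card')
  also have "\<dots> \<le> card A + card A"
    unfolding E_def by (rule order_trans[OF card_Un_le add_mono]) (simp_all add: card_image_le A)
  also have "\<dots> < DIM(complex^'n)" using A by simp
  finally obtain x where "x \<noteq> 0" "\<And>y. y \<in> span E \<Longrightarrow> orthogonal x y"
    using orthogonal_to_subspace_exists by blast
  then have "x \<in> {x. \<forall>y \<in> E. orthogonal y x}"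
    by (simp add: span_base orthogonal_commute)
  with \<open>x \<noteq> 0\<close> that show ?thesis
    unfolding E_def cinner_orthogonal_complement_eq[symmetric] by blast
qed

lemma hermitian_orthonormal_eigenvectors:
  fixes H :: "complex^'n^'n" and A :: "'n set"
  assumes herm: "cadj H = H"
  shows "\<exists>e d. (\<forall>i\<in>A. \<forall>j\<in>A. cinner (e i) (e j) = (if i = j then 1 else 0))
              \<and> (\<forall>i\<in>A. H *v e i = d i *\<^sub>R e i)"
  using finite[of A]
proof (induction A rule: finite_induct)
  case (insert a A)
  then obtain e d where on: "\<forall>i\<in>A. \<forall>j\<in>A. cinner (e i) (e j) = (if i = j then 1 else 0)"
    and ev: "\<forall>i\<in>A. H *v e i = d i *\<^sub>R e i" by blast
  define S where "S = {x. \<forall>i\<in>A. cinner (e i) x = 0}"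
  have S: "subspace S" unfolding S_def by (rule subspace_cinner_orthogonal_complement)
  have "card A < card (insert a A)" using insert by simp
  also have "\<dots> \<le> CARD('n)" by (rule card_mono) auto
  finally obtain x1 where "x1 \<noteq> 0" "\<And>i. i \<in> A \<Longrightarrow> cinner (e i) x1 = 0"
    by (rule exists_cinner_orthogonal[OF insert(1), where e = e]) auto
  then have x1: "x1 \<in> S" "x1 \<noteq> 0" by (auto simp: S_def)
  have inv: "H *v x \<in> S" if "x \<in> S" for x
  proof -
    have "cinner (e i) (H *v x) = 0" if "i \<in> A" for i
      using \<open>x \<in> S\<close> that ev herm by (simp add: S_def cinner_adjoint cinner_scaleR_left)
    then show ?thesis by (simp add: S_def)
  qed
  obtain x l where x: "x \<in> S" "norm x = 1" "H *v x = l *\<^sub>R x"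
    using hermitian_invariant_subspace_eigenvector[OF herm S inv x1] by blast
  have "cinner x x = 1" using x(2) by (simp add: cinner_self)
  moreover have "cinner (e k) x = 0" "cinner x (e k) = 0" if "k \<in> A" for k
    using x(1) that cnj_cinner[of "e k" x] by (auto simp: S_def)
  ultimately have "\<forall>i\<in>insert a A. \<forall>j\<in>insert a A.
      cinner ((e(a := x)) i) ((e(a := x)) j) = (if i = j then 1 else 0)"
    using on insert(2) by auto
  moreover have "\<forall>i\<in>insert a A. H *v (e(a := x)) i = (d(a := l)) i *\<^sub>R (e(a := x)) i"
    using ev x(3) insert(2) by auto
  ultimately show ?case by blast
qed simp

theorem hermitian_unitary_diagonalization:
  fixes H :: "complex^'n^'n"
  assumes herm: "cadj H = H"
  obtains U d where "unitary_mat U" "H = U ** rdiag d ** cadj U"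
proof -
  obtain e :: "'n \<Rightarrow> complex^'n" and d
    where on: "\<forall>i j. cinner (e i) (e j) = (if i = j then 1 else 0)"
      and ev: "\<forall>i. H *v e i = d i *\<^sub>R e i"
    using hermitian_orthonormal_eigenvectors[OF herm, of UNIV] by blast
  define U :: "complex^'n^'n" where "U = (\<chi> i j. e j $ i)"
  have "(cadj U ** U) $ i $ j = cinner (e i) (e j)" for i j
    by (simp add: U_def cadj_def matrix_matrix_mult_def cinner_def)
  then have U: "unitary_mat U"
    using on by (simp add: unitary_mat_def vec_eq_iff mat_def)
  have "(H ** U) $ i $ j = (U ** rdiag d) $ i $ j" for i j
  proof -
    have "(H ** U) $ i $ j = (H *v e j) $ i"
      by (simp add: U_def matrix_matrix_mult_def matrix_vector_mult_def)
    also have "\<dots> = of_real (d j) * e j $ i"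
      unfolding ev[rule_format] vector_scaleR_component by (simp add: scaleR_conv_of_real)
    finally show ?thesis by (simp add: matrix_mult_rdiag_component U_def mult.commute)
  qed
  then have "H ** U = U ** rdiag d" by (simp add: vec_eq_iff)
  then have "H = U ** rdiag d ** cadj U"
    using unitary_mat_right[OF U] by (metis matrix_mul_assoc matrix_mul_rid)
  with U that show ?thesis by blast
qed


section \<open>Functional calculus\<close>

text \<open>Two unitary diagonalisations of the same matrix differ by a unitary \<open>W\<close> intertwining the
  diagonals; \<open>W\<close> only connects equal eigenvalues, so it also intertwines \<open>h\<close> of the diagonals.
  This is why \<open>mfun\<close> does not depend on the choice made by \<open>SOME\<close>.\<close>

lemma unitary_diag_conj_fun_eq:
  assumes U: "unitary_mat U" and V: "unitary_mat V"
    and eq: "U ** rdiag d ** cadj U = V ** rdiag e ** cadj V"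
  shows "U ** rdiag (h \<circ> d) ** cadj U = V ** rdiag (h \<circ> e) ** cadj V"
proof -
  define W where "W = cadj U ** V"
  have "rdiag d = cadj U ** (U ** rdiag d ** cadj U) ** U"
    by (simp add: matrix_mul_assoc unitary_mat_cancel[OF U])
  then have "rdiag d ** W = W ** rdiag e"
    unfolding eq W_def by (simp add: matrix_mul_assoc unitary_mat_cancel[OF U] unitary_mat_cancel[OF V])
  then have "rdiag (h \<circ> d) ** W = W ** rdiag (h \<circ> e)"
    using rdiag_commute_component
    by (fastforce simp: vec_eq_iff rdiag_matrix_mult_component matrix_mult_rdiag_component)
  then have "U ** (rdiag (h \<circ> d) ** W) ** cadj V = U ** (W ** rdiag (h \<circ> e)) ** cadj V"
    by simp
  then show ?thesis
    unfolding W_def by (simp add: matrix_mul_assoc unitary_mat_cancel[OF U] unitary_mat_cancel[OF V])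
qed

lemma mfun_eq:
  assumes U: "unitary_mat U" and A: "A = U ** rdiag d ** cadj U"
  shows "mfun h A = U ** rdiag (h \<circ> d) ** cadj U"
proof -
  let ?P = "\<lambda>B. \<exists>U d. unitary_mat U \<and> A = U ** rdiag d ** cadj U \<and> B = U ** rdiag (h \<circ> d) ** cadj U"
  have "?P (U ** rdiag (h \<circ> d) ** cadj U)" using U A by blast
  then have "?P (mfun h A)" unfolding mfun_def by (rule someI)
  then obtain U' d' where "unitary_mat U'" "A = U' ** rdiag d' ** cadj U'"
    "mfun h A = U' ** rdiag (h \<circ> d') ** cadj U'" by blast
  then show ?thesis using unitary_diag_conj_fun_eq[OF U, of U' d d' h] A by simp
qed

lemma gram_unitary_diagonalization:
  fixes X :: "complex^'n^'n"
  obtains V d where "unitary_mat V" "cadj X ** X = V ** rdiag d ** cadj V" "\<And>i. d i \<ge> 0"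
proof -
  obtain V d where V: "unitary_mat V" and H: "cadj X ** X = V ** rdiag d ** cadj V"
    using hermitian_unitary_diagonalization[of "cadj X ** X"] by (auto simp: cadj_mult)
  have "cadj (X ** V) ** (X ** V) = cadj V ** (cadj X ** X) ** V"
    by (simp add: cadj_mult matrix_mul_assoc)
  also have "\<dots> = rdiag d"
    unfolding H by (simp add: matrix_mul_assoc unitary_mat_cancel[OF V])
  finally have "d i \<ge> 0" for i
    by (simp add: gram_rdiag_column[of "X ** V" d i] sum_nonneg)
  with V H that show ?thesis by blast
qed

lemma mabs_diagonalization:
  fixes X :: "complex^'n^'n"
  obtains V d where "unitary_mat V" "\<And>i. d i \<ge> 0" "cadj X ** X = V ** rdiag d ** cadj V"
    "mabs X = V ** rdiag (sqrt \<circ> d) ** cadj V"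
    "\<And>h. mfun h (mabs X) = V ** rdiag (h \<circ> (sqrt \<circ> d)) ** cadj V"
proof -
  obtain V d where V: "unitary_mat V" and H: "cadj X ** X = V ** rdiag d ** cadj V"
    and d: "\<And>i. d i \<ge> 0" using gram_unitary_diagonalization[of X] by blast
  have m: "mabs X = V ** rdiag (sqrt \<circ> d) ** cadj V"
    unfolding mabs_def by (rule mfun_eq[OF V H])
  show ?thesis by (rule that[OF V d H m mfun_eq[OF V m]])
qed

lemma cadj_mfun_mabs: "cadj (mfun h (mabs X)) = mfun h (mabs X)"
proof -
  obtain V d where "mfun h (mabs X) = V ** rdiag (h \<circ> (sqrt \<circ> d)) ** cadj V"
    by (rule mabs_diagonalization[of X]) blast
  then show ?thesis by (simp add: cadj_mult matrix_mul_assoc)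
qed

lemma mfun_power2_sqrt_mabs: "mfun (\<lambda>t. (sqrt t)\<^sup>2) (mabs X) = mabs X"
proof -
  obtain V d where d: "\<And>i. d i \<ge> 0" and m: "mabs X = V ** rdiag (sqrt \<circ> d) ** cadj V"
    and e: "mfun (\<lambda>t. (sqrt t)\<^sup>2) (mabs X) = V ** rdiag ((\<lambda>t. (sqrt t)\<^sup>2) \<circ> (sqrt \<circ> d)) ** cadj V"
    by (rule mabs_diagonalization[of X]) blast
  have "(\<lambda>t. (sqrt t)\<^sup>2) \<circ> (sqrt \<circ> d) = sqrt \<circ> d" using d by (simp add: fun_eq_iff)
  then show ?thesis using e m by simp
qed


section \<open>The mixed Schwarz inequality\<close>

lemma inner_conj_rdiag_power2:
  "x \<bullet> ((V ** rdiag (\<lambda>i. (w i)\<^sup>2) ** cadj V) *v x) = (norm (rdiag w *v (cadj V *v x)))\<^sup>2"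
proof -
  let ?y = "cadj V *v x"
  have "rdiag (\<lambda>i. (w i)\<^sup>2) = rdiag w ** rdiag w" by (simp add: rdiag_mult power2_eq_square)
  then have "(V ** rdiag (\<lambda>i. (w i)\<^sup>2) ** cadj V) *v x = V *v (rdiag w *v (rdiag w *v ?y))"
    by (simp only: matrix_vector_mul_assoc matrix_mul_assoc)
  moreover have "x \<bullet> (V *v z) = ?y \<bullet> z" for z
    using inner_cadj[of x "cadj V" z] by simp
  moreover have "?y \<bullet> (rdiag w *v z) = (rdiag w *v ?y) \<bullet> z" for z
    using inner_cadj[of ?y "rdiag w" z] by simp
  ultimately show ?thesis by (simp add: power2_norm_eq_inner)
qed

lemma norm_le_of_gram_rdiag_le_one:
  assumes NN: "cadj N ** N = rdiag c" and c: "\<And>i. c i \<le> 1"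
  shows "norm (N *v x) \<le> norm x"
proof (rule power2_le_imp_le)
  have "(norm (N *v x))\<^sup>2 = x \<bullet> (cadj N *v (N *v x))"
    by (simp add: inner_cadj power2_norm_eq_inner)
  also have "\<dots> = (\<Sum>i\<in>UNIV. c i * (cmod (x$i))\<^sup>2)"
    by (simp add: matrix_vector_mul_assoc NN Re_cinner[symmetric] cinner_rdiag_self)
  also have "\<dots> \<le> (\<Sum>i\<in>UNIV. (cmod (x$i))\<^sup>2)"
    by (rule sum_mono) (use mult_right_mono[OF c] in auto)
  also have "\<dots> = (norm x)\<^sup>2"
    by (simp add: norm_vec_def L2_set_def sum_nonneg)
  finally show "(norm (N *v x))\<^sup>2 \<le> (norm x)\<^sup>2" .
qed simp

text \<open>If \<open>M\<^sup>* M = diag d\<close> and \<open>F\<^sub>i G\<^sub>j = \<surd>d\<^sub>i\<close> wherever \<open>M\<^sub>j\<^sub>i \<noteq> 0\<close>, then \<open>M = diag G \<cdot> N \<cdot> diag F\<close>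
  for the partial isometry \<open>N = M diag(d\<^sup>-\<^sup>1\<^sup>/\<^sup>2)\<close>.\<close>

lemma two_inner_le_of_gram_rdiag:
  fixes M :: "complex^'n^'n" and d F G :: "'n \<Rightarrow> real"
  assumes MM: "cadj M ** M = rdiag d"
    and FG: "\<And>i j. M$j$i \<noteq> 0 \<Longrightarrow> F i * G j = sqrt (d i)"
  shows "2 * (b \<bullet> (M *v a)) \<le> (norm (rdiag F *v a))\<^sup>2 + (norm (rdiag G *v b))\<^sup>2"
proof -
  define c where "c i = (if d i > 0 then 1 / sqrt (d i) else 0)" for i
  define N where "N = M ** rdiag c"
  have dpos: "d i > 0" if "M$j$i \<noteq> 0" for i j
  proof -
    have "(cmod (M$j$i))\<^sup>2 \<le> (\<Sum>k\<in>UNIV. (cmod (M$k$i))\<^sup>2)"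
      by (rule member_le_sum) auto
    moreover have "(cmod (M$j$i))\<^sup>2 > 0" using that by simp
    ultimately show ?thesis using gram_rdiag_column[OF MM, of i] by linarith
  qed
  have "M$j$i = (rdiag G ** N ** rdiag F)$j$i" for i j
  proof (cases "M$j$i = 0")
    case False
    then have "F i * G j * c i = 1" using FG[OF False] dpos[OF False] by (simp add: c_def)
    then have "of_real (G j) * (M$j$i * of_real (c i)) * of_real (F i) = M$j$i"
      by (metis (no_types) mult.commute mult.left_commute mult.right_neutral of_real_1 of_real_mult)
    then show ?thesis by (simp add: N_def rdiag_matrix_mult_component matrix_mult_rdiag_component)
  qed (simp add: N_def rdiag_matrix_mult_component matrix_mult_rdiag_component)
  then have M: "M = rdiag G ** N ** rdiag F" by (simp add: vec_eq_iff)
  have "cadj N ** N = rdiag c ** (cadj M ** M) ** rdiag c"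
    by (simp add: N_def cadj_mult matrix_mul_assoc)
  also have "\<dots> = rdiag (\<lambda>i. c i * d i * c i)" by (simp add: MM rdiag_mult)
  moreover have "c i * d i * c i \<le> 1" for i by (simp add: c_def)
  ultimately have contraction: "norm (N *v y) \<le> norm y" for y
    using norm_le_of_gram_rdiag_le_one by metis
  define \<alpha> where "\<alpha> = rdiag F *v a"
  define \<beta> where "\<beta> = rdiag G *v b"
  have "b \<bullet> (M *v a) = \<beta> \<bullet> (N *v \<alpha>)"
    using inner_cadj[of b "rdiag G"] by (simp add: M \<alpha>_def \<beta>_def matrix_vector_mul_assoc[symmetric])
  moreover have "0 \<le> (norm (\<beta> - N *v \<alpha>))\<^sup>2" by simp
  then have "2 * (\<beta> \<bullet> (N *v \<alpha>)) \<le> (norm \<beta>)\<^sup>2 + (norm (N *v \<alpha>))\<^sup>2"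
    by (simp add: power2_norm_eq_inner inner_diff_left inner_diff_right inner_commute)
  moreover have "(norm (N *v \<alpha>))\<^sup>2 \<le> (norm \<alpha>)\<^sup>2"
    using contraction by (simp add: power_mono)
  ultimately show ?thesis unfolding \<alpha>_def \<beta>_def by linarith
qed

lemma mixed_schwarz:
  fixes T :: "complex^'n^'n" and f g :: "real \<Rightarrow> real"
  assumes fg: "\<And>t. t \<ge> 0 \<Longrightarrow> f t * g t = t"
  shows "2 * (u \<bullet> (T *v v))
    \<le> v \<bullet> (mfun (\<lambda>t. (f t)\<^sup>2) (mabs T) *v v) + u \<bullet> (mfun (\<lambda>t. (g t)\<^sup>2) (mabs (cadj T)) *v u)"
proof -
  obtain V d where V: "unitary_mat V" and d: "\<And>i. d i \<ge> 0"
    and HV: "cadj T ** T = V ** rdiag d ** cadj V"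
    and A: "\<And>h. mfun h (mabs T) = V ** rdiag (h \<circ> (sqrt \<circ> d)) ** cadj V"
    by (rule mabs_diagonalization[of T]) blast
  obtain W e where W: "unitary_mat W"
    and HW: "T ** cadj T = W ** rdiag e ** cadj W"
    and B: "\<And>h. mfun h (mabs (cadj T)) = W ** rdiag (h \<circ> (sqrt \<circ> e)) ** cadj W"
    by (rule mabs_diagonalization[of "cadj T"]) auto
  \<comment> \<open>\<open>M\<close> is \<open>T\<close> written in eigenbases of \<open>|T|\<close> and \<open>|T\<^sup>*|\<close>; it only links equal eigenvalues\<close>
  define M where "M = cadj W ** T ** V"
  have "cadj M ** M = cadj V ** (cadj T ** T) ** V"
    by (simp add: M_def cadj_mult matrix_mul_assoc unitary_mat_cancel[OF W])
  also have "\<dots> = rdiag d"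
    unfolding HV by (simp add: matrix_mul_assoc unitary_mat_cancel[OF V])
  finally have MM: "cadj M ** M = rdiag d" .
  have "M ** cadj M = cadj W ** (T ** cadj T) ** W"
    by (simp add: M_def cadj_mult matrix_mul_assoc unitary_mat_cancel[OF V])
  also have "\<dots> = rdiag e"
    unfolding HW by (simp add: matrix_mul_assoc unitary_mat_cancel[OF W])
  finally have "rdiag e ** M = M ** rdiag d"
    by (metis MM matrix_mul_assoc)
  define F where "F i = f (sqrt (d i))" for i
  define G where "G j = g (sqrt (e j))" for j
  have FG: "F i * G j = sqrt (d i)" if "M$j$i \<noteq> 0" for i j
    using rdiag_commute_component[OF \<open>rdiag e ** M = M ** rdiag d\<close> that] fg d
    by (simp add: F_def G_def)
  have "T = W ** M ** cadj V"
    by (simp add: M_def matrix_mul_assoc unitary_mat_cancel[OF V] unitary_mat_cancel[OF W])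
  then have "u \<bullet> (T *v v) = (cadj W *v u) \<bullet> (M *v (cadj V *v v))"
    using inner_cadj[of u "cadj W"] by (simp add: matrix_vector_mul_assoc[symmetric])
  moreover have "(\<lambda>t. (f t)\<^sup>2) \<circ> (sqrt \<circ> d) = (\<lambda>i. (F i)\<^sup>2)"
    and "(\<lambda>t. (g t)\<^sup>2) \<circ> (sqrt \<circ> e) = (\<lambda>j. (G j)\<^sup>2)"
    by (simp_all add: fun_eq_iff F_def G_def)
  ultimately show ?thesis
    using two_inner_le_of_gram_rdiag[OF MM FG] by (simp add: A B inner_conj_rdiag_power2)
qed


section \<open>Operator norm bound from a positive block matrix\<close>

lemma norm_matrix_vector_le_opnorm: "norm (A *v x) \<le> opnorm A * norm x"
  unfolding opnorm_def by (rule onorm[OF matrix_vector_mul_bounded_linear])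

lemma opnorm_le: "(\<And>x. norm (A *v x) \<le> b * norm x) \<Longrightarrow> opnorm A \<le> b"
  unfolding opnorm_def by (rule onorm_le)

lemma opnorm_nonneg: "0 \<le> opnorm A"
  unfolding opnorm_def by (rule onorm_pos_le[OF matrix_vector_mul_bounded_linear])

lemma opnorm_scaleR: "opnorm (c *\<^sub>R A) = \<bar>c\<bar> * opnorm A"
  unfolding opnorm_def scaleR_matrix_vector_mult
  by (rule onorm_scaleR[OF matrix_vector_mul_bounded_linear])

lemma inner_le_opnorm: "x \<bullet> (A *v x) \<le> opnorm A * (norm x)\<^sup>2"
proof -
  have "x \<bullet> (A *v x) \<le> norm x * norm (A *v x)" by (rule norm_cauchy_schwarz)
  also have "\<dots> \<le> norm x * (opnorm A * norm x)"
    by (rule mult_left_mono[OF norm_matrix_vector_le_opnorm]) simp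
  finally show ?thesis by (simp add: power2_eq_square mult_ac)
qed

text \<open>The quadratic form of the block matrix \<open>[[A, T\<^sup>*], [T, B]]\<close> at \<open>(v, u)\<close>.\<close>

definition block_form ::
  "complex^'n^'n \<Rightarrow> complex^'n^'n \<Rightarrow> complex^'n^'n \<Rightarrow> complex^'n \<Rightarrow> complex^'n \<Rightarrow> real" where
  "block_form A B T v u = v \<bullet> (A *v v) + u \<bullet> (B *v u) + 2 * (u \<bullet> (T *v v))"

lemma block_form_uminus_left: "block_form A B T (- v) u = block_form A B T v (- u)"
  by (simp add: block_form_def vec.neg)

text \<open>In the coordinates \<open>p = v + u\<close>, \<open>q = v - u\<close> the form becomes
  \<open>(\<langle>X p, p\<rangle> + \<langle>Y q, q\<rangle>)/2\<close> plus a term bilinear in \<open>(p, q)\<close>; that term changes sign under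
  \<open>(p, q) \<mapsto> (r p, -q/r)\<close>, so it cancels in the sum below.\<close>

lemma block_form_rotate_sum:
  fixes A B T :: "complex^'n^'n"
  assumes hA: "cadj A = A" and hB: "cadj B = B" and r: "r \<noteq> 0"
  defines "X \<equiv> (1/2) *\<^sub>R (A + B) + ReM T" and "Y \<equiv> (1/2) *\<^sub>R (A + B) - ReM T"
  shows "block_form A B T ((1/2) *\<^sub>R (p + q)) ((1/2) *\<^sub>R (p - q))
       + block_form A B T ((1/2) *\<^sub>R (r *\<^sub>R p - q /\<^sub>R r)) ((1/2) *\<^sub>R (r *\<^sub>R p + q /\<^sub>R r))
     = (1 + r\<^sup>2) / 2 * (p \<bullet> (X *v p)) + (1 + 1 / r\<^sup>2) / 2 * (q \<bullet> (Y *v q))"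
proof -
  have a: "q \<bullet> (A *v p) = p \<bullet> (A *v q)" by (rule hermitian_inner_commute[OF hA])
  have b: "q \<bullet> (B *v p) = p \<bullet> (B *v q)" by (rule hermitian_inner_commute[OF hB])
  have t: "x \<bullet> (cadj T *v y) = y \<bullet> (T *v x)" for x y by (simp add: inner_cadj inner_commute)
  show ?thesis
    unfolding block_form_def X_def Y_def ReM_def
    using r
    by (simp add: matrix_vector_right_distrib matrix_vector_mult_diff_distrib matrix_vector_scaleR
        matrix_vector_mult_add_rdistrib matrix_vector_mult_diff_rdistrib scaleR_matrix_vector_mult
        inner_add_left inner_add_right inner_diff_left inner_diff_right t a b
        field_simps power2_eq_square)
qed

lemma block_form_rotate_le:
  fixes A B T :: "complex^'n^'n"
  assumes hA: "cadj A = A" and hB: "cadj B = B" and psd: "\<And>v u. 0 \<le> block_form A B T v u"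
  defines "X \<equiv> (1/2) *\<^sub>R (A + B) + ReM T" and "Y \<equiv> (1/2) *\<^sub>R (A + B) - ReM T"
  shows "block_form A B T ((1/2) *\<^sub>R (p + q)) ((1/2) *\<^sub>R (p - q))
    \<le> (opnorm X + opnorm Y) * ((norm p)\<^sup>2 + (norm q)\<^sup>2) / 2"
proof -
  let ?\<Phi> = "block_form A B T ((1/2) *\<^sub>R (p + q)) ((1/2) *\<^sub>R (p - q))"
  have X: "p \<bullet> (X *v p) \<le> opnorm X * (norm p)\<^sup>2" and Y: "q \<bullet> (Y *v q) \<le> opnorm Y * (norm q)\<^sup>2"
    by (rule inner_le_opnorm)+
  have x: "opnorm X \<ge> 0" and y: "opnorm Y \<ge> 0" by (rule opnorm_nonneg)+
  show ?thesis
  proof (cases "p = 0 \<or> q = 0")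
    case True
    \<comment> \<open>for \<open>r = 1\<close> the two points coincide up to sign\<close>
    then have "2 * ?\<Phi> = p \<bullet> (X *v p) + q \<bullet> (Y *v q)"
      using block_form_rotate_sum[OF hA hB, of 1 T p q] block_form_uminus_left[of A B T]
      unfolding X_def Y_def by (auto simp: scaleR_diff_right)
    moreover have "0 \<le> opnorm X * (norm q)\<^sup>2" "0 \<le> opnorm Y * (norm p)\<^sup>2" using x y by simp_all
    ultimately show ?thesis using X Y by (simp add: algebra_simps)
  next
    case False
    define r where "r = norm q / norm p"
    have r: "r \<noteq> 0" "r\<^sup>2 * (norm p)\<^sup>2 = (norm q)\<^sup>2" "(norm p)\<^sup>2 = (norm q)\<^sup>2 / r\<^sup>2"
      using False by (simp_all add: r_def power_divide)
    have "?\<Phi> \<le> ?\<Phi> + block_form A B T ((1/2) *\<^sub>R (r *\<^sub>R p - q /\<^sub>R r)) ((1/2) *\<^sub>R (r *\<^sub>R p + q /\<^sub>R r))"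
      using psd by simp
    also have "\<dots> = (1 + r\<^sup>2) / 2 * (p \<bullet> (X *v p)) + (1 + 1 / r\<^sup>2) / 2 * (q \<bullet> (Y *v q))"
      unfolding X_def Y_def by (rule block_form_rotate_sum[OF hA hB r(1)])
    also have "\<dots> \<le> (1 + r\<^sup>2) / 2 * (opnorm X * (norm p)\<^sup>2) + (1 + 1 / r\<^sup>2) / 2 * (opnorm Y * (norm q)\<^sup>2)"
      using X Y by (intro add_mono mult_left_mono) auto
    also have "\<dots> = (opnorm X + opnorm Y) * ((norm p)\<^sup>2 + (norm q)\<^sup>2) / 2"
      using r by (simp add: field_simps)
    finally show ?thesis .
  qed
qed

lemma opnorm_le_of_block_form_nonneg:
  fixes A B T :: "complex^'n^'n"
  assumes hA: "cadj A = A" and hB: "cadj B = B" and psd: "\<And>v u. 0 \<le> block_form A B T v u"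
  shows "opnorm T \<le> (opnorm ((1/2) *\<^sub>R (A + B) + ReM T) + opnorm ((1/2) *\<^sub>R (A + B) - ReM T)) / 2"
    (is "_ \<le> (?x + ?y) / 2")
proof (rule opnorm_le)
  fix v
  show "norm (T *v v) \<le> (?x + ?y) / 2 * norm v"
  proof (cases "T *v v = 0")
    case True
    then show ?thesis using opnorm_nonneg[of "(1/2) *\<^sub>R (A + B) + ReM T"]
      opnorm_nonneg[of "(1/2) *\<^sub>R (A + B) - ReM T"] by simp
  next
    case False
    define u where "u = (norm v / norm (T *v v)) *\<^sub>R (T *v v)"
    have uT: "u \<bullet> (T *v v) = norm v * norm (T *v v)" and nu: "norm u = norm v"
      using False by (simp_all add: u_def power2_norm_eq_inner[symmetric] power2_eq_square)
    have "0 \<le> block_form A B T v (- u)" by (rule psd)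
    then have "4 * (norm v * norm (T *v v)) \<le> block_form A B T v u"
      using uT by (simp add: block_form_def vec.neg)
    also have "\<dots> = block_form A B T ((1/2) *\<^sub>R ((v + u) + (v - u))) ((1/2) *\<^sub>R ((v + u) - (v - u)))"
      by (simp add: scaleR_2[symmetric])
    also have "\<dots> \<le> (?x + ?y) * ((norm (v + u))\<^sup>2 + (norm (v - u))\<^sup>2) / 2"
      by (rule block_form_rotate_le[OF hA hB psd])
    also have "(norm (v + u))\<^sup>2 + (norm (v - u))\<^sup>2 = 2 * (norm v)\<^sup>2 + 2 * (norm u)\<^sup>2"
      unfolding power2_norm_eq_inner
      by (simp add: inner_add_left inner_add_right inner_diff_left inner_diff_right inner_commute)
    also have "\<dots> = 4 * (norm v)\<^sup>2" using nu by simp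
    finally have "norm v * (4 * norm (T *v v)) \<le> norm v * (2 * (?x + ?y) * norm v)"
      by (simp add: power2_eq_square algebra_simps)
    moreover have "norm v > 0" using False by auto
    ultimately have "4 * norm (T *v v) \<le> 2 * (?x + ?y) * norm v"
      by (simp only: mult_le_cancel_left_pos)
    then show ?thesis by linarith
  qed
qed


lemma opnorm_le_mfun_mabs:
  fixes T :: "complex^'n^'n" and f g :: "real \<Rightarrow> real"
  assumes fg: "\<And>t. t \<ge> 0 \<Longrightarrow> f t * g t = t"
  defines "A \<equiv> mfun (\<lambda>t. (f t)\<^sup>2) (mabs T)" and "B \<equiv> mfun (\<lambda>t. (g t)\<^sup>2) (mabs (cadj T))"
  shows "opnorm T \<le> (1/2) * (opnorm ((1/2) *\<^sub>R (A + B) + ReM T) + opnorm ((1/2) *\<^sub>R (A + B) - ReM T))"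
proof -
  have "0 \<le> block_form A B T v u" for v u
    using mixed_schwarz[OF fg, of "- u" T v] unfolding A_def B_def
    by (simp add: block_form_def vec.neg)
  then show ?thesis
    using opnorm_le_of_block_form_nonneg[of A B T] unfolding A_def B_def
    by (simp add: cadj_mfun_mabs)
qed

theorem corollary3p7:
  fixes T :: "complex^'n^'n" and f g :: "real \<Rightarrow> real"
  assumes "continuous_on {0..} f" and "continuous_on {0..} g"
    and "\<And>t. t \<ge> 0 \<Longrightarrow> f t \<ge> 0" and "\<And>t. t \<ge> 0 \<Longrightarrow> g t \<ge> 0"
    and "\<And>t. t \<ge> 0 \<Longrightarrow> f t * g t = t"
  shows "opnorm T \<le> (1/2) *
           (opnorm (scaleR (1/2) (mfun (\<lambda>t. (f t)^2) (mabs T) + mfun (\<lambda>t. (g t)^2) (mabs (cadj T))) + ReM T)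
          + opnorm (scaleR (1/2) (mfun (\<lambda>t. (f t)^2) (mabs T) + mfun (\<lambda>t. (g t)^2) (mabs (cadj T))) - ReM T))
    \<and> opnorm T \<le> (1/4) *
           (opnorm (mabs T + mabs (cadj T) + 2 *\<^sub>R ReM T)
          + opnorm (mabs T + mabs (cadj T) - 2 *\<^sub>R ReM T))"
proof -
  have "opnorm T \<le> (1/2) * (opnorm ((1/2) *\<^sub>R (mabs T + mabs (cadj T)) + ReM T)
                            + opnorm ((1/2) *\<^sub>R (mabs T + mabs (cadj T)) - ReM T))"
    using opnorm_le_mfun_mabs[of sqrt sqrt T] by (simp add: mfun_power2_sqrt_mabs)
  moreover have "(1/2) *\<^sub>R (mabs T + mabs (cadj T)) + ReM T
      = (1/2) *\<^sub>R (mabs T + mabs (cadj T) + 2 *\<^sub>R ReM T)"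
    and "(1/2) *\<^sub>R (mabs T + mabs (cadj T)) - ReM T
      = (1/2) *\<^sub>R (mabs T + mabs (cadj T) - 2 *\<^sub>R ReM T)"
    by (simp_all add: scaleR_add_right scaleR_diff_right)
  ultimately show ?thesis
    using opnorm_le_mfun_mabs[OF assms(5)] by (simp add: opnorm_scaleR)
qed

end
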